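(* Let $n,\ell,v$ be positive integers. For all $\kappa\in[0,1]$ and $\rho\ge0$ such that $t_1<t_2$, where $$t_1=\frac{1+\kappa}{2}+\frac v\ell+\rho,\qquad t_2=\frac{1+3\kappa}{2}-\frac{15\kappa^2}{4}-\frac{5\kappa}{\ell}-\rho,$$ a pair $(S,U)$ sampled from $\mathsf{Strong}_\kappa$ is a $(t_1,t_2,v)$-strong yes instance, except with probability at most $\ell^62^{-n}+2\ell^2\exp\!\left(-\frac{\rho^22^n}{2\ell^2}\right)$.
   Context: $\mathsf{Strong}_\kappa$: sample a multiset $S=\{s_1,\dots,s_\ell\}$ with each $s_i\in\{0,1\}^n$ independent uniform; let $\gamma_y^{(S)}=\frac1\ell\sum_{i,j\in[\ell]}(-1)^{y\cdot(s_i\oplus s_j)}$; include each $y\in\{0,1\}^n$ in the set $U$ independently with probability $1-\frac12e^{-\kappa\gamma_y^{(S)}}$. For sets $S,U\subseteq\{0,1\}^n$ (multisets treated as their underlying sets), with $\Pi_S=\sum_{x\in S}|x\rangle\langle x|$, $(S,U)$ is $\alpha$-spectrally Forrelated for $\alpha=\|\Pi_UH^{\otimes n}\Pi_S\|_{\mathrm{op}}^2$. A pair $(S,U)$ is a $(t_1,t_2,v)$-strong yes instance if $(S,U)$ is at least $t_2$-spectrally Forrelated (value $\ge t_2$) and for every subset $\Delta\subset S$ with $|\Delta|\le v$, $(\Delta,U)$ is at most $t_1$-spectrally Forrelated (value $\le t_1$). *)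

theory Defs
  imports "HOL-Probability.Probability"
begin

definition bitstrings :: "nat \<Rightarrow> bool list set" where
  "bitstrings n = {xs. length xs = n}"

text \<open>Inner product y . x over GF(2), as a natural number whose parity matters.\<close>
definition bdot :: "bool list \<Rightarrow> bool list \<Rightarrow> nat" where
  "bdot y x = card {i. i < length y \<and> i < length x \<and> y ! i \<and> x ! i}"

definition bxor :: "bool list \<Rightarrow> bool list \<Rightarrow> bool list" where
  "bxor x y = map2 (\<noteq>) x y"

definition hadamard :: "nat \<Rightarrow> bool list \<Rightarrow> bool list \<Rightarrow> real" where
  "hadamard n y x = (-1) ^ bdot y x / sqrt (2 ^ n)"

text \<open>Operator norm of Pi_U H^{\<otimes>n} Pi_S (with respect to the Euclidean norm on
  the 2^n-dimensional space; the matrix is real, so real and complex operator norms agree).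
  A vector in the range of Pi_S is a function supported on S.\<close>
definition opnorm_PHP :: "nat \<Rightarrow> bool list set \<Rightarrow> bool list set \<Rightarrow> real" where
  "opnorm_PHP n S U =
     Sup {sqrt (\<Sum>y\<in>U \<inter> bitstrings n. (\<Sum>x\<in>S \<inter> bitstrings n. hadamard n y x * f x)\<^sup>2)
          | f. (\<Sum>x\<in>S \<inter> bitstrings n. (f x)\<^sup>2) \<le> 1}"

definition spec_forr :: "nat \<Rightarrow> bool list set \<Rightarrow> bool list set \<Rightarrow> real" where
  "spec_forr n S U = (opnorm_PHP n S U)\<^sup>2"

definition strong_yes_instance ::
  "nat \<Rightarrow> real \<Rightarrow> real \<Rightarrow> nat \<Rightarrow> bool list set \<Rightarrow> bool list set \<Rightarrow> bool" where
  "strong_yes_instance n t1 t2 v S U \<longleftrightarrow>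
     spec_forr n S U \<ge> t2 \<and>
     (\<forall>\<Delta>. \<Delta> \<subseteq> S \<and> card \<Delta> \<le> v \<longrightarrow> spec_forr n \<Delta> U \<le> t1)"

definition gamma :: "nat \<Rightarrow> (nat \<Rightarrow> bool list) \<Rightarrow> bool list \<Rightarrow> real" where
  "gamma l s y = (1 / real l) *
     (\<Sum>i<l. \<Sum>j<l. (-1) ^ bdot y (bxor (s i) (s j)))"

text \<open>The distribution Strong_kappa over pairs (S,U); S is the underlying set of the
  multiset {s_1,...,s_l}.\<close>
definition Strong :: "nat \<Rightarrow> nat \<Rightarrow> real \<Rightarrow> (bool list set \<times> bool list set) pmf" where
  "Strong n l \<kappa> =
     do {
       s \<leftarrow> Pi_pmf {..<l} [] (\<lambda>_. pmf_of_set (bitstrings n));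
       g \<leftarrow> Pi_pmf (bitstrings n) False
              (\<lambda>y. bernoulli_pmf (1 - exp (- \<kappa> * gamma l s y) / 2));
       return_pmf (s ` {..<l}, {y \<in> bitstrings n. g y})
     }"

end

theory Submission
  imports Defs
begin

(*
  Write chi_y(x) = (-1)^(y.x) and K_w(x, x') = E_y w(y) chi_y(x) chi_y(x') for a weight w on the cube.
  The Forrelation form sum_{y in U} (sum_{x in S} H_yx f(x))^2 equals sum f(x) f(x') K_U(x, x'), where K_U is
  the kernel of the indicator of U. Given the sample s, each y enters U independently with probability
  p_y = 1 - exp(-kappa gamma_y) / 2, so by Hoeffding and a union bound over the l^2 pairs every K_U(s_i, s_j)
  is within rho / l of K_p(s_i, s_j), except with probability 2 l^2 exp(-2 rho^2 2^n / l^2).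

  The expected kernel is governed by gamma: E_y gamma_y^k is l^(-k) times the sum over words t in [l]^(2k)
  of E_y prod_i chi_y(s_(t_i)), which is 1 when every letter of t occurs an even number of times and,
  unless the s_i satisfy an XOR relation of length at most 6 (probability at most l^6 2^(-n)), 0 otherwise.
  Counting even words gives E gamma >= 1, E gamma^2 >= 3 - 2/l, E gamma^3 <= 15 and
  K_gamma(s_i, s_j) <= [i = j] + 2/l. Combined with 1/2 + x/2 - x^2/4 <= 1 - exp(-x)/2 <= 1/2 + x/2,
  the uniform unit vector on S yields the lower bound t2, and Cauchy-Schwarz on sets of size at most v
  yields the upper bound t1.
*)

section \<open>Characters of the Boolean cube\<close>

lemma bdot_eq_length_filter: "bdot y x = length (filter (\<lambda>(a, b). a \<and> b) (zip y x))"
  unfolding bdot_def length_filter_conv_card by (rule arg_cong[where f = card]) auto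

lemma bdot_Nil [simp]: "bdot [] x = 0" "bdot y [] = 0"
  by (simp_all add: bdot_eq_length_filter)

lemma bdot_Cons [simp]: "bdot (a # y) (b # x) = (if a \<and> b then 1 else 0) + bdot y x"
  by (simp add: bdot_eq_length_filter)

lemma bdot_commute: "bdot y x = bdot x y"
  unfolding bdot_def by (rule arg_cong[where f = card]) blast

definition chi :: "bool list \<Rightarrow> bool list \<Rightarrow> real" where
  "chi y x = (-1) ^ bdot y x"

lemma chi_Nil [simp]: "chi [] x = 1" "chi y [] = 1"
  by (simp_all add: chi_def)

lemma chi_Cons [simp]: "chi (a # y) (b # x) = (if a \<and> b then -1 else 1) * chi y x"
  by (simp add: chi_def)

lemma chi_commute: "chi y x = chi x y"
  by (simp add: chi_def bdot_commute)

lemma bdot_replicate_False [simp]: "bdot (replicate m False) x = 0"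
  by (auto simp: bdot_def)

lemma chi_replicate_False [simp]: "chi (replicate m False) x = 1" "chi y (replicate m False) = 1"
  by (simp_all add: chi_def bdot_commute[of y])

lemma chi_mult_self [simp]: "chi y x * chi y x = 1"
  by (simp add: chi_def flip: power_add)

lemma chi_cases: "chi y x = 1 \<or> chi y x = -1"
  by (simp add: chi_def) (metis neg_one_even_power neg_one_odd_power)

lemma chi_power: "chi y x ^ m = (if even m then 1 else chi y x)"
  using chi_cases[of y x] by auto

lemma chi_bxor: "length x = length x' \<Longrightarrow> chi y x * chi y x' = chi y (bxor x x')"
proof (induction x arbitrary: x' y)
  case Nil
  then show ?case by (simp add: bxor_def)
next
  case (Cons b x)
  then obtain b' x'' where "x' = b' # x''" "length x = length x''"
    by (cases x') auto
  with Cons.IH show ?case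
    by (cases y) (auto simp: bxor_def)
qed

lemma length_bxor [simp]: "length (bxor x x') = min (length x) (length x')"
  by (simp add: bxor_def)

lemma bxor_eq_replicate_False_iff:
  "length x = length x' \<Longrightarrow> bxor x x' = replicate (length x) False \<longleftrightarrow> x = x'"
proof (induction x arbitrary: x')
  case (Cons a x)
  then show ?case by (cases x') (auto simp: bxor_def)
qed (simp add: bxor_def)

lemma finite_bitstrings [simp]: "finite (bitstrings n)"
  unfolding bitstrings_def using finite_lists_length_eq[of "UNIV :: bool set" n] by simp

lemma card_bitstrings: "card (bitstrings n) = 2 ^ n"
  unfolding bitstrings_def using card_lists_length_eq[of "UNIV :: bool set" n] by simp

lemma replicate_False_in_bitstrings [simp]: "replicate n False \<in> bitstrings n"
  by (simp add: bitstrings_def)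

lemma bitstrings_nonempty: "bitstrings n \<noteq> {}"
  using replicate_False_in_bitstrings by blast

lemma sum_bitstrings_Suc:
  "(\<Sum>y\<in>bitstrings (Suc n). f y) = (\<Sum>y\<in>bitstrings n. f (True # y)) + (\<Sum>y\<in>bitstrings n. f (False # y))"
proof -
  have eq: "bitstrings (Suc n) = (\<lambda>(b, y). b # y) ` (UNIV \<times> bitstrings n)"
    unfolding bitstrings_def by (auto simp: length_Suc_conv image_iff)
  have inj: "inj_on (\<lambda>(b, y). b # y) (UNIV \<times> bitstrings n)"
    by (auto simp: inj_on_def)
  have "(\<Sum>y\<in>bitstrings (Suc n). f y) = (\<Sum>p\<in>UNIV \<times> bitstrings n. f (fst p # snd p))"
    unfolding eq by (subst sum.reindex[OF inj]) (simp add: case_prod_beta)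
  also have "\<dots> = (\<Sum>b\<in>UNIV. \<Sum>y\<in>bitstrings n. f (b # y))"
    by (simp add: sum.cartesian_product case_prod_beta)
  finally show ?thesis
    by (simp add: UNIV_bool add.commute)
qed

lemma sum_chi:
  "x \<in> bitstrings n \<Longrightarrow> (\<Sum>y\<in>bitstrings n. chi y x) = (if x = replicate n False then 2 ^ n else 0)"
proof (induction n arbitrary: x)
  case 0
  then show ?case by (simp add: bitstrings_def)
next
  case (Suc n)
  then obtain b x' where "x = b # x'" "x' \<in> bitstrings n"
    by (cases x) (auto simp: bitstrings_def)
  with Suc.IH[of x'] show ?case
    by (simp add: sum_bitstrings_Suc sum_negf card_bitstrings)
qed

lemma chi_orthogonal:
  assumes "x \<in> bitstrings n" "x' \<in> bitstrings n"
  shows "(\<Sum>y\<in>bitstrings n. chi y x * chi y x') = (if x = x' then 2 ^ n else 0)"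
proof -
  have len: "length x = n" "length x' = n"
    using assms by (auto simp: bitstrings_def)
  then have "(\<Sum>y\<in>bitstrings n. chi y x * chi y x') = (\<Sum>y\<in>bitstrings n. chi y (bxor x x'))"
    by (simp add: chi_bxor)
  also have "\<dots> = (if bxor x x' = replicate n False then 2 ^ n else 0)"
    by (rule sum_chi) (simp add: bitstrings_def len)
  finally show ?thesis
    using bxor_eq_replicate_False_iff[of x x'] len by simp
qed

definition bxor_list :: "nat \<Rightarrow> bool list list \<Rightarrow> bool list" where
  "bxor_list n xs = foldr bxor xs (replicate n False)"

lemma bxor_list_in_bitstrings:
  "set xs \<subseteq> bitstrings n \<Longrightarrow> bxor_list n xs \<in> bitstrings n"
  by (induction xs) (auto simp: bxor_list_def bitstrings_def)

lemma prod_list_chi: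
  "set xs \<subseteq> bitstrings n \<Longrightarrow> prod_list (map (chi y) xs) = chi y (bxor_list n xs)"
proof (induction xs)
  case (Cons x xs)
  then have "length x = length (bxor_list n xs)"
    using bxor_list_in_bitstrings[of xs n] by (auto simp: bitstrings_def)
  with Cons show ?case
    by (simp add: bxor_list_def chi_bxor)
qed (simp add: bxor_list_def)

lemma sum_prod_list_chi:
  "set xs \<subseteq> bitstrings n \<Longrightarrow> (\<Sum>y\<in>bitstrings n. prod_list (map (chi y) xs)) \<in> {0, 2 ^ n}"
  by (simp add: prod_list_chi sum_chi bxor_list_in_bitstrings)

section \<open>Words with even letter multiplicities\<close>

definition words :: "nat \<Rightarrow> nat \<Rightarrow> nat list set" where
  "words l m = {t. set t \<subseteq> {..<l} \<and> length t = m}"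

definition even_word :: "'a list \<Rightarrow> bool" where
  "even_word t \<longleftrightarrow> (\<forall>k. even (count_list t k))"

lemma finite_words [simp]: "finite (words l m)"
  unfolding words_def by (rule finite_lists_length_eq) simp

lemma card_words: "card (words l m) = l ^ m"
  unfolding words_def using card_lists_length_eq[of "{..<l}" m] by simp

lemma words_Suc: "words l (Suc m) = (\<lambda>(i, t). i # t) ` ({..<l} \<times> words l m)"
  unfolding words_def by (auto simp: length_Suc_conv image_iff)

lemma power_sum_eq_sum_words:
  fixes f :: "nat \<Rightarrow> 'a :: comm_semiring_1"
  shows "(\<Sum>i<l. f i) ^ m = (\<Sum>t\<in>words l m. prod_list (map f t))"
proof (induction m)
  case 0
  have "words l 0 = {[]}"
    by (auto simp: words_def)
  then show ?case by simp
next
  case (Suc m)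
  have inj: "inj_on (\<lambda>(i, t). i # t) ({..<l} \<times> words l m)"
    by (auto simp: inj_on_def)
  have "(\<Sum>t\<in>words l (Suc m). prod_list (map f t)) = (\<Sum>(i, t)\<in>{..<l} \<times> words l m. f i * prod_list (map f t))"
    unfolding words_Suc by (subst sum.reindex[OF inj]) (simp add: case_prod_beta)
  also have "\<dots> = (\<Sum>i<l. f i) * (\<Sum>t\<in>words l m. prod_list (map f t))"
    by (simp add: sum.cartesian_product[symmetric] sum_product)
  finally show ?case
    using Suc by simp
qed

lemma prod_list_map_eq_prod_count:
  "prod_list (map g t) = (\<Prod>k\<in>set t. g k ^ count_list t k)"
proof (induction t)
  case (Cons i t)
  have rest: "(\<Prod>k\<in>set t - {i}. g k ^ count_list (i # t) k) = (\<Prod>k\<in>set t - {i}. g k ^ count_list t k)"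
    by (intro prod.cong) auto
  show ?case
  proof (cases "i \<in> set t")
    case True
    then have "(\<Prod>k\<in>set (i # t). g k ^ count_list (i # t) k)
        = g i ^ count_list (i # t) i * (\<Prod>k\<in>set t - {i}. g k ^ count_list (i # t) k)"
      by (simp only: set_simps insert_absorb) (rule prod.remove; simp)
    also have "\<dots> = g i ^ Suc (count_list t i) * (\<Prod>k\<in>set t - {i}. g k ^ count_list t k)"
      by (simp only: rest) simp
    finally have "(\<Prod>k\<in>set (i # t). g k ^ count_list (i # t) k)
        = g i ^ Suc (count_list t i) * (\<Prod>k\<in>set t - {i}. g k ^ count_list t k)" .
    with Cons.IH True show ?thesis
      by (simp add: prod.remove[of "set t" i] mult.assoc)
  next
    case False
    then have "(\<Prod>k\<in>set t. g k ^ count_list (i # t) k) = (\<Prod>k\<in>set t. g k ^ count_list t k)"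
      using rest by simp
    with Cons.IH False show ?thesis
      by simp
  qed
qed simp

lemma prod_list_even_word:
  fixes g :: "'a \<Rightarrow> 'b :: comm_monoid_mult"
  assumes "\<And>k. g k * g k = 1" and "even_word t"
  shows "prod_list (map g t) = 1"
proof -
  have "g k ^ count_list t k = 1" for k
    using assms unfolding even_word_def by (metis evenE power_mult power2_eq_square power_one)
  then show ?thesis
    by (simp add: prod_list_map_eq_prod_count)
qed

lemma count_list_replicate: "count_list (replicate m i) k = (if i = k then m else 0)"
  by (induction m) auto

lemma even_word_append_replicate:
  "even m \<Longrightarrow> even_word (t @ replicate m i) \<longleftrightarrow> even_word t"
  by (simp add: even_word_def count_list_replicate)

lemma even_word_append: "even_word xs \<Longrightarrow> even_word ys \<Longrightarrow> even_word (xs @ ys)"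
  by (simp add: even_word_def)

lemma even_word_double: "even_word (xs @ xs)"
  by (simp add: even_word_def)

lemma even_word_append_rev: "even_word (xs @ rev xs)"
  by (simp add: even_word_def)

text \<open>An even word of length \<open>m + 2\<close> arises from an even word of length \<open>m\<close> by putting a
  letter in front and inserting it once more at one of \<open>m + 1\<close> positions.\<close>
lemma card_even_words_Suc_Suc_le:
  "card {t\<in>words l (Suc (Suc m)). even_word t} \<le> l * Suc m * card {t\<in>words l m. even_word t}"
proof -
  define F where "F = (\<lambda>(a :: nat, p :: nat, u :: nat list). a # take p u @ a # drop p u)"
  define X where "X = {..<l} \<times> {..m} \<times> {t\<in>words l m. even_word t}"
  have "{t\<in>words l (Suc (Suc m)). even_word t} \<subseteq> F ` X"
  proof
    fix t
    assume t: "t \<in> {t\<in>words l (Suc (Suc m)). even_word t}"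
    then obtain a xs where t_eq: "t = a # xs"
      unfolding words_def by (cases t) auto
    have even_t: "even (count_list t k)" for k
      using t by (simp add: even_word_def)
    have "odd (count_list xs a)"
      using even_t[of a] by (simp add: t_eq)
    then have "a \<in> set xs"
      by (metis count_notin even_zero)
    then obtain ys zs where xs: "xs = ys @ a # zs"
      by (meson split_list)
    have "even (count_list (ys @ zs) k)" for k
      using even_t[of k] unfolding t_eq xs by (cases "k = a") simp_all
    then have "(a, length ys, ys @ zs) \<in> X"
      using t unfolding X_def words_def even_word_def t_eq xs by auto
    moreover have "t = F (a, length ys, ys @ zs)"
      unfolding F_def t_eq xs by simp
    ultimately show "t \<in> F ` X"
      by (rule rev_image_eqI)
  qed
  then have "card {t\<in>words l (Suc (Suc m)). even_word t} \<le> card (F ` X)"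
    by (rule card_mono[rotated]) (simp add: X_def)
  also have "\<dots> \<le> card X"
    by (rule card_image_le) (simp add: X_def)
  finally show ?thesis
    by (simp add: X_def card_cartesian_product algebra_simps)
qed

lemma card_even_words_0: "card {t\<in>words l 0. even_word t} = 1"
proof -
  have "{t\<in>words l 0. even_word t} = {[]}"
    by (auto simp: words_def even_word_def)
  then show ?thesis by simp
qed

lemma card_even_words_2_le: "card {t\<in>words l 2. even_word t} \<le> l"
  using card_even_words_Suc_Suc_le[of l 0] by (simp add: card_even_words_0 numeral_2_eq_2)

lemma card_even_words_4_le: "card {t\<in>words l 4. even_word t} \<le> 3 * l ^ 2"
proof -
  have "card {t\<in>words l 4. even_word t} \<le> l * 3 * card {t\<in>words l 2. even_word t}"
    using card_even_words_Suc_Suc_le[of l 2] by (simp add: numeral_eq_Suc)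
  also have "\<dots> \<le> l * 3 * l"
    using card_even_words_2_le[of l] by simp
  finally show ?thesis
    by (simp add: power2_eq_square)
qed

lemma card_even_words_6_le: "card {t\<in>words l 6. even_word t} \<le> 15 * l ^ 3"
proof -
  have "card {t\<in>words l 6. even_word t} \<le> l * 5 * card {t\<in>words l 4. even_word t}"
    using card_even_words_Suc_Suc_le[of l 4] by (simp add: numeral_eq_Suc)
  also have "\<dots> \<le> l * 5 * (3 * l ^ 2)"
    using card_even_words_4_le[of l] by simp
  finally show ?thesis
    by (simp add: power2_eq_square power3_eq_cube)
qed

lemma card_even_words_2_ge: "l \<le> card {t\<in>words l 2. even_word t}"
proof -
  have "inj_on (\<lambda>a. [a, a]) {..<l}"
    by (auto simp: inj_on_def)
  then have "l = card ((\<lambda>a. [a, a]) ` {..<l})"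
    by (simp add: card_image)
  also have "\<dots> \<le> card {t\<in>words l 2. even_word t}"
    using even_word_double[of "[_]"] by (intro card_mono) (simp, auto simp: words_def)
  finally show ?thesis .
qed

lemma card_off_diagonal:
  assumes "finite A"
  shows "card {(a, b)\<in>A \<times> A. a \<noteq> b} = card A * card A - card A"
proof -
  define X where "X = {(a, b)\<in>A \<times> A. a \<noteq> b}"
  have "finite X"
    unfolding X_def by (rule finite_subset[of _ "A \<times> A"]) (use assms in auto)
  have "card (X \<union> (\<lambda>a. (a, a)) ` A) = card X + card ((\<lambda>a. (a, a)) ` A)"
    by (rule card_Un_disjoint) (use \<open>finite X\<close> assms in \<open>auto simp: X_def\<close>)
  moreover have "A \<times> A = X \<union> (\<lambda>a. (a, a)) ` A"
    unfolding X_def by auto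
  ultimately have "card (A \<times> A) = card X + card A"
    by (simp add: card_image inj_on_def)
  then show ?thesis
    by (simp add: X_def card_cartesian_product)
qed

lemma card_even_words_4_ge: "3 * l * l - 2 * l \<le> card {t\<in>words l 4. even_word t}"
proof -
  define D where "D = {(a, b)\<in>{..<l} \<times> {..<l}. a \<noteq> b}"
  define F :: "nat \<times> nat + nat \<times> nat + nat \<times> nat \<Rightarrow> nat list"
    where "F = case_sum (\<lambda>(a, b). [a, a, b, b]) (case_sum (\<lambda>(a, b). [a, b, a, b]) (\<lambda>(a, b). [a, b, b, a]))"
  have "finite D"
    unfolding D_def by (rule finite_subset[of _ "{..<l} \<times> {..<l}"]) auto
  moreover have "card D = l * l - l"
    unfolding D_def using card_off_diagonal[of "{..<l}"] by simp
  moreover have "inj_on F ({..<l} \<times> {..<l} <+> (D <+> D))"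
    unfolding F_def D_def by (auto simp: inj_on_def)
  ultimately have card_image_F: "card (F ` ({..<l} \<times> {..<l} <+> (D <+> D))) = l * l + 2 * (l * l - l)"
    by (simp add: card_image card_Plus card_cartesian_product)
  have "even_word [a, a, b, b]" "even_word [a, b, a, b]" "even_word [a, b, b, a]" for a b :: nat
    using even_word_append[OF even_word_double[of "[a]"] even_word_double[of "[b]"]]
      even_word_double[of "[a, b]"] even_word_append_rev[of "[a, b]"] by simp_all
  then have "F ` ({..<l} \<times> {..<l} <+> (D <+> D)) \<subseteq> {t\<in>words l 4. even_word t}"
    unfolding F_def D_def words_def by auto
  then have "l * l + 2 * (l * l - l) \<le> card {t\<in>words l 4. even_word t}"
    unfolding card_image_F[symmetric] by (intro card_mono) simp_all
  then show ?thesis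
    by (simp add: diff_mult_distrib2)
qed

lemma even_words_append_distinct_pair:
  assumes "i \<noteq> j"
  shows "{t\<in>words l 2. even_word (t @ [i, j])} \<subseteq> {[i, j], [j, i]}"
proof
  fix t
  assume t: "t \<in> {t\<in>words l 2. even_word (t @ [i, j])}"
  then obtain a b where t_eq: "t = [a, b]"
    unfolding words_def by (auto simp: numeral_2_eq_2 length_Suc_conv)
  have "even_word [a, b, i, j]"
    using t t_eq by simp
  then have "even (count_list [a, b, i, j] i)" "even (count_list [a, b, i, j] j)"
    unfolding even_word_def by blast+
  then have "(a = i \<and> b = j) \<or> (a = j \<and> b = i)"
    using assms by (auto split: if_splits)
  then show "t \<in> {[i, j], [j, i]}"
    unfolding t_eq by auto
qed

section \<open>Correlations of the sample and moments of gamma\<close>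

definition cube_avg :: "nat \<Rightarrow> (bool list \<Rightarrow> real) \<Rightarrow> real" where
  "cube_avg n f = (\<Sum>y\<in>bitstrings n. f y) / 2 ^ n"

lemma cube_avg_add: "cube_avg n (\<lambda>y. f y + g y) = cube_avg n f + cube_avg n g"
  by (simp add: cube_avg_def sum.distrib add_divide_distrib)

lemma cube_avg_diff: "cube_avg n (\<lambda>y. f y - g y) = cube_avg n f - cube_avg n g"
  by (simp add: cube_avg_def sum_subtractf diff_divide_distrib)

lemma cube_avg_mult_left: "cube_avg n (\<lambda>y. c * f y) = c * cube_avg n f"
  by (simp add: cube_avg_def sum_distrib_left)

lemma cube_avg_divide: "cube_avg n (\<lambda>y. f y / c) = cube_avg n f / c"
  unfolding cube_avg_def sum_divide_distrib[symmetric] by (simp add: mult.commute)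

lemma cube_avg_sum: "cube_avg n (\<lambda>y. \<Sum>i\<in>I. f i y) = (\<Sum>i\<in>I. cube_avg n (f i))"
  by (simp add: cube_avg_def sum.swap[of _ I] sum_divide_distrib)

lemma cube_avg_const [simp]: "cube_avg n (\<lambda>_. c) = c"
  by (simp add: cube_avg_def card_bitstrings)

lemma cube_avg_mono: "(\<And>y. y \<in> bitstrings n \<Longrightarrow> f y \<le> g y) \<Longrightarrow> cube_avg n f \<le> cube_avg n g"
  by (simp add: cube_avg_def divide_right_mono sum_mono)

definition word_corr :: "nat \<Rightarrow> (nat \<Rightarrow> bool list) \<Rightarrow> nat list \<Rightarrow> real" where
  "word_corr n s t = cube_avg n (\<lambda>y. prod_list (map (\<lambda>i. chi y (s i)) t))"

lemma word_corr_cases: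
  assumes "\<And>i. i \<in> set t \<Longrightarrow> s i \<in> bitstrings n"
  shows "word_corr n s t = 0 \<or> word_corr n s t = 1"
proof -
  have "set (map s t) \<subseteq> bitstrings n"
    using assms by auto
  from sum_prod_list_chi[OF this] show ?thesis
    by (auto simp: word_corr_def cube_avg_def o_def)
qed

lemma word_corr_even_word: "even_word t \<Longrightarrow> word_corr n s t = 1"
proof -
  assume "even_word t"
  then have "prod_list (map (\<lambda>i. chi y (s i)) t) = 1" for y
    by (intro prod_list_even_word) simp_all
  then show ?thesis
    by (simp add: word_corr_def)
qed

lemma word_corr_append_replicate: "even m \<Longrightarrow> word_corr n s (t @ replicate m i) = word_corr n s t"
  by (simp add: word_corr_def chi_power)

text \<open>With \<open>w\<close> the indicator of \<open>U\<close> this is the Gram kernel of \<open>\<Pi>\<^sub>U H \<Pi>\<^sub>S\<close>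
  (see \<open>forr_form_eq_quadratic_form\<close>); with \<open>w = keep_prob \<kappa> \<circ> gamma l s\<close> it is its
  expectation under \<open>Strong\<^sub>\<kappa>\<close>.\<close>
definition char_kernel :: "nat \<Rightarrow> (bool list \<Rightarrow> real) \<Rightarrow> bool list \<Rightarrow> bool list \<Rightarrow> real" where
  "char_kernel n w x x' = cube_avg n (\<lambda>y. w y * chi y x * chi y x')"

lemma quadratic_form_char_kernel:
  "(\<Sum>x\<in>D. \<Sum>x'\<in>D. f x * f x' * char_kernel n w x x') = cube_avg n (\<lambda>y. w y * (\<Sum>x\<in>D. chi y x * f x)\<^sup>2)"
proof -
  have "w y * (\<Sum>x\<in>D. chi y x * f x)\<^sup>2 = (\<Sum>x\<in>D. \<Sum>x'\<in>D. f x * f x' * (w y * chi y x * chi y x'))" for y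
  proof -
    have "w y * (\<Sum>x\<in>D. chi y x * f x)\<^sup>2 = (\<Sum>x\<in>D. \<Sum>x'\<in>D. w y * ((chi y x * f x) * (chi y x' * f x')))"
      by (simp only: power2_eq_square sum_product) (simp only: sum_distrib_left)
    also have "\<dots> = (\<Sum>x\<in>D. \<Sum>x'\<in>D. f x * f x' * (w y * chi y x * chi y x'))"
      by (intro sum.cong refl) (simp only: mult_ac)
    finally show ?thesis .
  qed
  then have "cube_avg n (\<lambda>y. w y * (\<Sum>x\<in>D. chi y x * f x)\<^sup>2)
      = (\<Sum>x\<in>D. \<Sum>x'\<in>D. cube_avg n (\<lambda>y. f x * f x' * (w y * chi y x * chi y x')))"
    by (simp only: cube_avg_sum)
  also have "\<dots> = (\<Sum>x\<in>D. \<Sum>x'\<in>D. f x * f x' * char_kernel n w x x')"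
    by (simp only: cube_avg_mult_left char_kernel_def mult.assoc)
  finally show ?thesis ..
qed

lemma char_kernel_one:
  "x \<in> bitstrings n \<Longrightarrow> x' \<in> bitstrings n \<Longrightarrow> char_kernel n (\<lambda>_. 1) x x' = (if x = x' then 1 else 0)"
  by (simp add: char_kernel_def cube_avg_def chi_orthogonal)

lemma cube_avg_square_sum_chi:
  assumes "D \<subseteq> bitstrings n"
  shows "cube_avg n (\<lambda>y. (\<Sum>x\<in>D. chi y x * f x)\<^sup>2) = (\<Sum>x\<in>D. (f x)\<^sup>2)"
proof -
  have fin: "finite D"
    using assms by (rule finite_subset) simp
  have "cube_avg n (\<lambda>y. (\<Sum>x\<in>D. chi y x * f x)\<^sup>2) = (\<Sum>x\<in>D. \<Sum>x'\<in>D. f x * f x' * char_kernel n (\<lambda>_. 1) x x')"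
    using quadratic_form_char_kernel[where w = "\<lambda>_. 1"] by (simp only: mult_1)
  also have "\<dots> = (\<Sum>x\<in>D. \<Sum>x'\<in>D. if x' = x then (f x)\<^sup>2 else 0)"
  proof (intro sum.cong refl)
    fix x x'
    assume "x \<in> D" "x' \<in> D"
    with assms have "x \<in> bitstrings n" "x' \<in> bitstrings n"
      by auto
    then show "f x * f x' * char_kernel n (\<lambda>_. 1) x x' = (if x' = x then (f x)\<^sup>2 else 0)"
      by (simp add: char_kernel_one power2_eq_square)
  qed
  also have "\<dots> = (\<Sum>x\<in>D. (f x)\<^sup>2)"
    using fin by simp
  finally show ?thesis .
qed

locale sample =
  fixes n l :: nat and s :: "nat \<Rightarrow> bool list"
  assumes l_pos: "0 < l"
    and s_in_bitstrings: "\<And>i. i < l \<Longrightarrow> s i \<in> bitstrings n"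
begin

lemma word_corr_words_cases: "t \<in> words l m \<Longrightarrow> word_corr n s t = 0 \<or> word_corr n s t = 1"
  by (rule word_corr_cases) (auto simp: words_def s_in_bitstrings)

lemma word_corr_nonneg: "t \<in> words l m \<Longrightarrow> 0 \<le> word_corr n s t"
  using word_corr_words_cases by fastforce

lemma gamma_eq_square: "gamma l s y = (\<Sum>i<l. chi y (s i))\<^sup>2 / l"
proof -
  have "chi y (bxor (s i) (s j)) = chi y (s i) * chi y (s j)" if "i < l" "j < l" for i j
    using s_in_bitstrings[OF that(1)] s_in_bitstrings[OF that(2)] by (simp add: chi_bxor bitstrings_def)
  then have "(\<Sum>i<l. \<Sum>j<l. chi y (bxor (s i) (s j))) = (\<Sum>i<l. chi y (s i))\<^sup>2"
    by (simp add: power2_eq_square sum_product)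
  then show ?thesis
    by (simp add: gamma_def chi_def[symmetric])
qed

lemma gamma_nonneg: "0 \<le> gamma l s y"
  by (simp add: gamma_eq_square)

lemma cube_avg_gamma_power:
  "cube_avg n (\<lambda>y. gamma l s y ^ k) = (\<Sum>t\<in>words l (2 * k). word_corr n s t) / l ^ k"
proof -
  have "gamma l s y ^ k = (\<Sum>i<l. chi y (s i)) ^ (2 * k) / l ^ k" for y
    by (simp add: gamma_eq_square power_divide power_mult)
  then have "gamma l s y ^ k = (\<Sum>t\<in>words l (2 * k). prod_list (map (\<lambda>i. chi y (s i)) t)) / l ^ k" for y
    by (simp only: power_sum_eq_sum_words)
  then show ?thesis
    by (simp add: word_corr_def cube_avg_divide cube_avg_sum)
qed

lemma card_even_words_le_sum_word_corr:
  "card {t\<in>words l m. even_word t} \<le> (\<Sum>t\<in>words l m. word_corr n s t)"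
proof -
  have "real (card {t\<in>words l m. even_word t}) = (\<Sum>t\<in>{t\<in>words l m. even_word t}. word_corr n s t)"
    by (simp add: word_corr_even_word)
  also have "\<dots> \<le> (\<Sum>t\<in>words l m. word_corr n s t)"
    by (intro sum_mono2) (auto simp: word_corr_nonneg)
  finally show ?thesis .
qed

lemma cube_avg_gamma_ge: "1 \<le> cube_avg n (gamma l s)"
proof -
  have "real l \<le> (\<Sum>t\<in>words l 2. word_corr n s t)"
    using card_even_words_le_sum_word_corr[of 2] card_even_words_2_ge[of l] by linarith
  then show ?thesis
    using cube_avg_gamma_power[of 1] l_pos by simp
qed

lemma cube_avg_gamma_square_ge: "3 - 2 / l \<le> cube_avg n (\<lambda>y. (gamma l s y)\<^sup>2)"
proof -
  have "real (3 * l * l - 2 * l) \<le> (\<Sum>t\<in>words l 4. word_corr n s t)"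
    using card_even_words_le_sum_word_corr[of 4] card_even_words_4_ge[of l] by linarith
  then have "3 * real l * real l - 2 * real l \<le> (\<Sum>t\<in>words l 4. word_corr n s t)"
    by (simp add: of_nat_diff)
  then have "(3 * real l * real l - 2 * real l) / (real l)\<^sup>2 \<le> (\<Sum>t\<in>words l 4. word_corr n s t) / (real l)\<^sup>2"
    by (simp add: divide_right_mono)
  moreover have "(3 * real l * real l - 2 * real l) / (real l)\<^sup>2 = 3 - 2 / l"
    using l_pos by (simp add: field_simps power2_eq_square)
  ultimately show ?thesis
    using cube_avg_gamma_power[of 2] by simp
qed

lemma gamma_kernel_eq:
  "char_kernel n (gamma l s) (s i) (s j) = (\<Sum>t\<in>words l 2. word_corr n s (t @ [i, j])) / l"
proof -
  have "gamma l s y * chi y (s i) * chi y (s j)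
      = (\<Sum>t\<in>words l 2. prod_list (map (\<lambda>k. chi y (s k)) (t @ [i, j]))) / l" for y
  proof -
    have "gamma l s y * chi y (s i) * chi y (s j)
        = (\<Sum>t\<in>words l 2. prod_list (map (\<lambda>k. chi y (s k)) t)) * (chi y (s i) * chi y (s j)) / l"
      by (simp only: gamma_eq_square power_sum_eq_sum_words) (simp add: mult_ac)
    also have "\<dots> = (\<Sum>t\<in>words l 2. prod_list (map (\<lambda>k. chi y (s k)) (t @ [i, j]))) / l"
      by (simp add: sum_distrib_right)
    finally show ?thesis .
  qed
  then show ?thesis
    unfolding char_kernel_def word_corr_def by (simp only: cube_avg_divide cube_avg_sum)
qed

lemma gamma_kernel_nonneg: "i < l \<Longrightarrow> j < l \<Longrightarrow> 0 \<le> char_kernel n (gamma l s) (s i) (s j)"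
  unfolding gamma_kernel_eq
  by (intro divide_nonneg_nonneg sum_nonneg word_corr_nonneg[of _ 4]) (auto simp: words_def)

end

text \<open>The correlation of a word is 1 if the XOR of the sampled strings along it vanishes and 0
  otherwise. Genericity thus says that no XOR relation of length 6 holds unless each index occurs an
  even number of times; by padding with pairs, the same follows for lengths 2 and 4.\<close>
definition xor_generic :: "nat \<Rightarrow> nat \<Rightarrow> (nat \<Rightarrow> bool list) \<Rightarrow> bool" where
  "xor_generic n l s \<longleftrightarrow> (\<forall>t\<in>words l 6. \<not> even_word t \<longrightarrow> word_corr n s t = 0)"

locale generic_sample = sample +
  assumes generic: "xor_generic n l s"
begin

lemma word_corr_odd_word:
  assumes "t \<in> words l m" "even m" "m \<le> 6" "\<not> even_word t"
  shows "word_corr n s t = 0"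
proof -
  let ?u = "t @ replicate (6 - m) 0"
  have "?u \<in> words l 6"
    using assms l_pos by (auto simp: words_def)
  moreover have "\<not> even_word ?u"
    using assms by (simp add: even_word_append_replicate)
  ultimately have "word_corr n s ?u = 0"
    using generic unfolding xor_generic_def by blast
  then show ?thesis
    using assms by (simp add: word_corr_append_replicate)
qed

lemma sum_word_corr_eq_card_even_words:
  assumes "even m" "m \<le> 6"
  shows "(\<Sum>t\<in>words l m. word_corr n s t) = card {t\<in>words l m. even_word t}"
proof -
  have "(\<Sum>t\<in>words l m. word_corr n s t) = (\<Sum>t\<in>{t\<in>words l m. even_word t}. word_corr n s t)"
    using assms by (intro sum.mono_neutral_right) (auto intro: word_corr_odd_word)
  then show ?thesis
    by (simp add: word_corr_even_word)
qed

lemma cube_avg_gamma_cube_le: "cube_avg n (\<lambda>y. gamma l s y ^ 3) \<le> 15"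
proof -
  have "real (card {t\<in>words l 6. even_word t}) \<le> real (15 * l ^ 3)"
    using card_even_words_6_le[of l] by (simp only: of_nat_le_iff)
  then have "(\<Sum>t\<in>words l 6. word_corr n s t) \<le> 15 * real l ^ 3"
    using sum_word_corr_eq_card_even_words[of 6] by simp
  then show ?thesis
    using cube_avg_gamma_power[of 3] l_pos by (simp add: divide_le_eq)
qed

lemma inj_on_sample: "inj_on s {..<l}"
proof (rule inj_onI, rule ccontr)
  fix i j
  assume ij: "i \<in> {..<l}" "j \<in> {..<l}" "s i = s j" "i \<noteq> j"
  then have "word_corr n s [i, j] = 0"
    by (intro word_corr_odd_word[of _ 2]) (auto simp: words_def even_word_def)
  moreover have "word_corr n s [i, j] = 1"
    using ij by (simp add: word_corr_def)
  ultimately show False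
    by simp
qed

lemma gamma_kernel_le:
  assumes "i < l" "j < l"
  shows "char_kernel n (gamma l s) (s i) (s j) \<le> (if i = j then 1 else 0) + 2 / l"
proof (cases "i = j")
  case True
  have "(\<Sum>t\<in>words l 2. word_corr n s (t @ [i, i])) = card {t\<in>words l 2. even_word t}"
    using sum_word_corr_eq_card_even_words[of 2] word_corr_append_replicate[of 2 n s _ i]
    by (simp add: numeral_2_eq_2)
  also have "\<dots> \<le> l"
    using card_even_words_2_le[of l] by simp
  finally have "char_kernel n (gamma l s) (s i) (s j) \<le> 1"
    using True l_pos by (simp add: gamma_kernel_eq divide_le_eq)
  also have "1 \<le> (if i = j then 1 else 0) + 2 / real l"
    using True by simp
  finally show ?thesis .
next
  case False
  have odd_zero: "word_corr n s (t @ [i, j]) = 0"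
    if "t \<in> words l 2" "\<not> even_word (t @ [i, j])" for t
    using that assms by (intro word_corr_odd_word[of _ 4]) (auto simp: words_def)
  have "(\<Sum>t\<in>words l 2. word_corr n s (t @ [i, j]))
      = (\<Sum>t\<in>{t\<in>words l 2. even_word (t @ [i, j])}. word_corr n s (t @ [i, j]))"
    using odd_zero by (intro sum.mono_neutral_right) auto
  also have "\<dots> = card {t\<in>words l 2. even_word (t @ [i, j])}"
    by (simp add: word_corr_even_word)
  also have "\<dots> \<le> card {[i, j], [j, i]}"
    using even_words_append_distinct_pair[OF False] by (simp only: of_nat_le_iff) (rule card_mono; simp)
  also have "\<dots> = 2"
    using False by simp
  finally show ?thesis
    using False l_pos by (simp add: gamma_kernel_eq divide_right_mono)
qed

end

section \<open>The spectral Forrelation value as a quadratic form\<close>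

definition forr_form :: "nat \<Rightarrow> bool list set \<Rightarrow> bool list set \<Rightarrow> (bool list \<Rightarrow> real) \<Rightarrow> real" where
  "forr_form n S U f = (\<Sum>y\<in>U \<inter> bitstrings n. (\<Sum>x\<in>S \<inter> bitstrings n. hadamard n y x * f x)\<^sup>2)"

lemma forr_form_eq_cube_avg:
  "forr_form n S U f = cube_avg n (\<lambda>y. indicator U y * (\<Sum>x\<in>S \<inter> bitstrings n. chi y x * f x)\<^sup>2)"
proof -
  have "(\<Sum>x\<in>S \<inter> bitstrings n. hadamard n y x * f x)\<^sup>2 = (\<Sum>x\<in>S \<inter> bitstrings n. chi y x * f x)\<^sup>2 / 2 ^ n" for y
    by (simp add: hadamard_def chi_def[symmetric] sum_divide_distrib[symmetric] power_divide)
  then have "forr_form n S U f = (\<Sum>y\<in>bitstrings n \<inter> U. (\<Sum>x\<in>S \<inter> bitstrings n. chi y x * f x)\<^sup>2) / 2 ^ n"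
    by (simp add: forr_form_def Int_commute[of U] sum_divide_distrib)
  then show ?thesis
    by (simp add: cube_avg_def Int_def)
qed

lemma forr_form_eq_quadratic_form:
  "forr_form n S U f = (\<Sum>x\<in>S \<inter> bitstrings n. \<Sum>x'\<in>S \<inter> bitstrings n. f x * f x' * char_kernel n (indicator U) x x')"
  by (simp add: forr_form_eq_cube_avg quadratic_form_char_kernel)

lemma forr_form_nonneg: "0 \<le> forr_form n S U f"
  unfolding forr_form_def by (intro sum_nonneg) simp

lemma forr_form_le_sum_squares: "forr_form n S U f \<le> (\<Sum>x\<in>S \<inter> bitstrings n. (f x)\<^sup>2)"
proof -
  have "forr_form n S U f \<le> cube_avg n (\<lambda>y. (\<Sum>x\<in>S \<inter> bitstrings n. chi y x * f x)\<^sup>2)"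
    unfolding forr_form_eq_cube_avg by (intro cube_avg_mono) (simp add: indicator_def)
  also have "\<dots> = (\<Sum>x\<in>S \<inter> bitstrings n. (f x)\<^sup>2)"
    by (rule cube_avg_square_sum_chi) simp
  finally show ?thesis .
qed

lemma opnorm_PHP_eq: "opnorm_PHP n S U = Sup {sqrt (forr_form n S U f) | f. (\<Sum>x\<in>S \<inter> bitstrings n. (f x)\<^sup>2) \<le> 1}"
  unfolding opnorm_PHP_def forr_form_def ..

lemma spec_forr_le:
  assumes "\<And>f. (\<Sum>x\<in>S \<inter> bitstrings n. (f x)\<^sup>2) \<le> 1 \<Longrightarrow> forr_form n S U f \<le> c"
  shows "spec_forr n S U \<le> c"
proof -
  define A where "A = {sqrt (forr_form n S U f) | f. (\<Sum>x\<in>S \<inter> bitstrings n. (f x)\<^sup>2) \<le> 1}"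
  have zero_in_A: "0 \<in> A"
    unfolding A_def by (rule CollectI, rule exI[of _ "\<lambda>_. 0"]) (simp add: forr_form_def)
  have "0 \<le> c"
    using assms[of "\<lambda>_. 0"] by (simp add: forr_form_def)
  have "a \<le> sqrt c" if "a \<in> A" for a
    using that assms unfolding A_def by auto
  then have "Sup A \<le> sqrt c" "0 \<le> Sup A"
    using zero_in_A by (auto intro!: cSup_least cSup_upper bdd_aboveI)
  then have "(Sup A)\<^sup>2 \<le> (sqrt c)\<^sup>2"
    by (intro power_mono)
  then show ?thesis
    using \<open>0 \<le> c\<close> unfolding spec_forr_def opnorm_PHP_eq A_def[symmetric] by simp
qed

lemma forr_form_le_spec_forr:
  assumes "(\<Sum>x\<in>S \<inter> bitstrings n. (f x)\<^sup>2) \<le> 1"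
  shows "forr_form n S U f \<le> spec_forr n S U"
proof -
  define A where "A = {sqrt (forr_form n S U f) | f. (\<Sum>x\<in>S \<inter> bitstrings n. (f x)\<^sup>2) \<le> 1}"
  have "a \<le> 1" if a_in_A: "a \<in> A" for a
  proof -
    obtain g where a: "a = sqrt (forr_form n S U g)" and "(\<Sum>x\<in>S \<inter> bitstrings n. (g x)\<^sup>2) \<le> 1"
      using a_in_A unfolding A_def by blast
    then have "forr_form n S U g \<le> 1"
      using forr_form_le_sum_squares[of n S U g] by linarith
    then show ?thesis
      by (simp add: a)
  qed
  then have "sqrt (forr_form n S U f) \<le> Sup A"
    using assms unfolding A_def by (intro cSup_upper bdd_aboveI) auto
  then have "(sqrt (forr_form n S U f))\<^sup>2 \<le> (Sup A)\<^sup>2"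
    by (rule power_mono) (simp add: forr_form_nonneg)
  then show ?thesis
    using forr_form_nonneg[of n S U f] unfolding spec_forr_def opnorm_PHP_eq A_def[symmetric] by simp
qed

lemma quadratic_form_perturb:
  fixes f :: "'a \<Rightarrow> real"
  assumes "\<And>x x'. x \<in> D \<Longrightarrow> x' \<in> D \<Longrightarrow> \<bar>K x x' - K' x x'\<bar> \<le> \<epsilon>"
  shows "(\<Sum>x\<in>D. \<Sum>x'\<in>D. f x * f x' * K x x') \<le> (\<Sum>x\<in>D. \<Sum>x'\<in>D. f x * f x' * K' x x') + \<epsilon> * (\<Sum>x\<in>D. \<bar>f x\<bar>)\<^sup>2"
proof -
  have "f x * f x' * K x x' \<le> f x * f x' * K' x x' + \<epsilon> * (\<bar>f x\<bar> * \<bar>f x'\<bar>)" if "x \<in> D" "x' \<in> D" for x x'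
  proof -
    have "f x * f x' * (K x x' - K' x x') \<le> \<bar>f x\<bar> * \<bar>f x'\<bar> * \<bar>K x x' - K' x x'\<bar>"
      by (metis abs_ge_self abs_mult)
    also have "\<dots> \<le> \<bar>f x\<bar> * \<bar>f x'\<bar> * \<epsilon>"
      using assms[OF that] by (intro mult_left_mono) auto
    finally show ?thesis
      by (simp add: algebra_simps)
  qed
  then have "(\<Sum>x\<in>D. \<Sum>x'\<in>D. f x * f x' * K x x')
      \<le> (\<Sum>x\<in>D. \<Sum>x'\<in>D. f x * f x' * K' x x' + \<epsilon> * (\<bar>f x\<bar> * \<bar>f x'\<bar>))"
    by (intro sum_mono) auto
  moreover have "(\<Sum>x\<in>D. \<Sum>x'\<in>D. \<epsilon> * (\<bar>f x\<bar> * \<bar>f x'\<bar>)) = \<epsilon> * (\<Sum>x\<in>D. \<bar>f x\<bar>)\<^sup>2"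
    by (simp only: power2_eq_square sum_product) (simp only: sum_distrib_left)
  ultimately show ?thesis
    by (simp add: sum.distrib)
qed

lemma exp_minus_bounds:
  fixes x :: real
  assumes "0 \<le> x"
  shows "1 - x \<le> exp (- x)" "exp (- x) \<le> 1 - x + x\<^sup>2 / 2"
proof -
  show "1 - x \<le> exp (- x)"
    using exp_ge_add_one_self[of "- x"] by simp
  have pos: "0 < 1 + x + x\<^sup>2 / 2"
    using assms by (simp add: add_pos_nonneg)
  have "exp (- x) = 1 / exp x"
    by (simp add: exp_minus field_simps)
  also have "\<dots> \<le> 1 / (1 + x + x\<^sup>2 / 2)"
    using exp_lower_Taylor_quadratic[OF assms] pos by (intro divide_left_mono) auto
  also have "\<dots> \<le> 1 - x + x\<^sup>2 / 2"
  proof -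
    have "(1 - x + x\<^sup>2 / 2) * (1 + x + x\<^sup>2 / 2) = 1 + x ^ 4 / 4"
      by (simp add: algebra_simps power2_eq_square power4_eq_xxxx)
    then show ?thesis
      using pos by (simp add: divide_le_eq)
  qed
  finally show "exp (- x) \<le> 1 - x + x\<^sup>2 / 2" .
qed

definition keep_prob :: "real \<Rightarrow> real \<Rightarrow> real" where
  "keep_prob \<kappa> g = 1 - exp (- \<kappa> * g) / 2"

lemma keep_prob_bounds:
  assumes "0 \<le> \<kappa> * g"
  shows "keep_prob \<kappa> g \<le> 1 / 2 + \<kappa> * g / 2"
    and "1 / 2 + \<kappa> * g / 2 - (\<kappa> * g)\<^sup>2 / 4 \<le> keep_prob \<kappa> g"
    and "0 \<le> keep_prob \<kappa> g" "keep_prob \<kappa> g \<le> 1"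
proof -
  have "exp (- (\<kappa> * g)) \<le> 1"
    using assms by simp
  then have "exp (- (\<kappa> * g)) \<le> 2"
    by linarith
  then show "keep_prob \<kappa> g \<le> 1 / 2 + \<kappa> * g / 2"
    and "1 / 2 + \<kappa> * g / 2 - (\<kappa> * g)\<^sup>2 / 4 \<le> keep_prob \<kappa> g"
    and "0 \<le> keep_prob \<kappa> g" "keep_prob \<kappa> g \<le> 1"
    using exp_minus_bounds[OF assms] exp_ge_zero[of "- (\<kappa> * g)"] by (auto simp: keep_prob_def)
qed

section \<open>Concentrated samples give strong yes instances\<close>

context sample
begin

lemma expected_quadratic_form_le:
  assumes "0 \<le> \<kappa>" "D \<subseteq> bitstrings n"
  shows "(\<Sum>x\<in>D. \<Sum>x'\<in>D. f x * f x' * char_kernel n (\<lambda>y. keep_prob \<kappa> (gamma l s y)) x x')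
    \<le> (\<Sum>x\<in>D. (f x)\<^sup>2) / 2 + \<kappa> / 2 * (\<Sum>x\<in>D. \<Sum>x'\<in>D. f x * f x' * char_kernel n (gamma l s) x x')"
proof -
  define F where "F y = (\<Sum>x\<in>D. chi y x * f x)\<^sup>2" for y
  have "keep_prob \<kappa> (gamma l s y) * F y \<le> F y / 2 + \<kappa> / 2 * (gamma l s y * F y)" for y
  proof -
    have "keep_prob \<kappa> (gamma l s y) \<le> 1 / 2 + \<kappa> * gamma l s y / 2"
      using assms(1) gamma_nonneg by (intro keep_prob_bounds) simp
    then have "keep_prob \<kappa> (gamma l s y) * F y \<le> (1 / 2 + \<kappa> * gamma l s y / 2) * F y"
      by (rule mult_right_mono) (simp add: F_def)
    then show ?thesis
      by (simp add: algebra_simps)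
  qed
  then have "cube_avg n (\<lambda>y. keep_prob \<kappa> (gamma l s y) * F y)
      \<le> cube_avg n (\<lambda>y. F y / 2 + \<kappa> / 2 * (gamma l s y * F y))"
    by (intro cube_avg_mono)
  also have "\<dots> = cube_avg n F / 2 + \<kappa> / 2 * cube_avg n (\<lambda>y. gamma l s y * F y)"
    by (simp only: cube_avg_add cube_avg_divide cube_avg_mult_left)
  finally show ?thesis
    using assms(2) unfolding F_def
    by (simp only: quadratic_form_char_kernel cube_avg_square_sum_chi)
qed

end

context generic_sample
begin

lemma sum_image_sample: "(\<Sum>x\<in>s ` {..<l}. g x) = (\<Sum>i<l. g (s i))"
  by (simp add: sum.reindex inj_on_sample)

lemma card_image_sample: "card (s ` {..<l}) = l"
  by (simp add: card_image inj_on_sample)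

lemma image_sample_subset_bitstrings: "s ` {..<l} \<subseteq> bitstrings n"
  using s_in_bitstrings by auto

lemma gamma_kernel_bounds:
  assumes "x \<in> s ` {..<l}" "x' \<in> s ` {..<l}"
  shows "0 \<le> char_kernel n (gamma l s) x x'"
    and "char_kernel n (gamma l s) x x' \<le> (if x = x' then 1 else 0) + 2 / l"
proof -
  obtain i j where ij: "i < l" "j < l" "x = s i" "x' = s j"
    using assms by auto
  moreover have "s i = s j \<longleftrightarrow> i = j"
    using inj_on_sample ij(1,2) by (auto dest: inj_onD)
  ultimately show "0 \<le> char_kernel n (gamma l s) x x'"
    and "char_kernel n (gamma l s) x x' \<le> (if x = x' then 1 else 0) + 2 / l"
    using gamma_kernel_nonneg gamma_kernel_le by auto
qed

lemma gamma_quadratic_form_le: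
  assumes "D \<subseteq> s ` {..<l}"
  shows "(\<Sum>x\<in>D. \<Sum>x'\<in>D. f x * f x' * char_kernel n (gamma l s) x x')
    \<le> (\<Sum>x\<in>D. (f x)\<^sup>2) + 2 / l * (\<Sum>x\<in>D. \<bar>f x\<bar>)\<^sup>2"
proof -
  have fin: "finite D"
    using assms by (rule finite_subset) simp
  have term_le: "f x * f x' * char_kernel n (gamma l s) x x'
      \<le> (if x' = x then (f x)\<^sup>2 else 0) + 2 / l * (\<bar>f x\<bar> * \<bar>f x'\<bar>)" if "x \<in> D" "x' \<in> D" for x x'
  proof -
    let ?K = "char_kernel n (gamma l s) x x'"
    have "x \<in> s ` {..<l}" "x' \<in> s ` {..<l}"
      using that assms by auto
    note K = gamma_kernel_bounds[OF this]
    have "f x * f x' * ?K \<le> \<bar>f x\<bar> * \<bar>f x'\<bar> * ?K"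
      using K(1) by (intro mult_right_mono) (simp_all flip: abs_mult)
    also have "\<dots> \<le> \<bar>f x\<bar> * \<bar>f x'\<bar> * ((if x = x' then 1 else 0) + 2 / l)"
      using K(2) by (intro mult_left_mono) simp_all
    also have "\<dots> = (if x' = x then (f x)\<^sup>2 else 0) + 2 / l * (\<bar>f x\<bar> * \<bar>f x'\<bar>)"
      by (auto simp: algebra_simps power2_eq_square)
    finally show ?thesis .
  qed
  have "(\<Sum>x\<in>D. \<Sum>x'\<in>D. f x * f x' * char_kernel n (gamma l s) x x')
      \<le> (\<Sum>x\<in>D. \<Sum>x'\<in>D. (if x' = x then (f x)\<^sup>2 else 0) + 2 / l * (\<bar>f x\<bar> * \<bar>f x'\<bar>))"
    using term_le by (intro sum_mono) auto
  also have "\<dots> = (\<Sum>x\<in>D. \<Sum>x'\<in>D. if x' = x then (f x)\<^sup>2 else 0)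
      + (\<Sum>x\<in>D. \<Sum>x'\<in>D. 2 / l * (\<bar>f x\<bar> * \<bar>f x'\<bar>))"
    by (simp only: sum.distrib)
  also have "(\<Sum>x\<in>D. \<Sum>x'\<in>D. 2 / l * (\<bar>f x\<bar> * \<bar>f x'\<bar>)) = 2 / l * (\<Sum>x\<in>D. \<bar>f x\<bar>)\<^sup>2"
    by (simp only: power2_eq_square sum_product) (simp only: sum_distrib_left)
  finally show ?thesis
    using fin by simp
qed

lemma cube_avg_keep_prob_gamma_ge:
  assumes "0 \<le> \<kappa>"
  shows "(1 + 3 * \<kappa>) / 2 - 15 * \<kappa>\<^sup>2 / 4 - \<kappa> / l \<le> cube_avg n (\<lambda>y. keep_prob \<kappa> (gamma l s y) * gamma l s y)"
proof -
  let ?g = "gamma l s"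
  have "?g y / 2 + \<kappa> / 2 * (?g y)\<^sup>2 - \<kappa>\<^sup>2 / 4 * ?g y ^ 3 \<le> keep_prob \<kappa> (?g y) * ?g y" for y
  proof -
    have "1 / 2 + \<kappa> * ?g y / 2 - (\<kappa> * ?g y)\<^sup>2 / 4 \<le> keep_prob \<kappa> (?g y)"
      using assms gamma_nonneg by (intro keep_prob_bounds) simp
    then have "(1 / 2 + \<kappa> * ?g y / 2 - (\<kappa> * ?g y)\<^sup>2 / 4) * ?g y \<le> keep_prob \<kappa> (?g y) * ?g y"
      by (rule mult_right_mono) (rule gamma_nonneg)
    then show ?thesis
      by (simp add: algebra_simps power2_eq_square power3_eq_cube)
  qed
  then have "cube_avg n (\<lambda>y. ?g y / 2 + \<kappa> / 2 * (?g y)\<^sup>2 - \<kappa>\<^sup>2 / 4 * ?g y ^ 3)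
      \<le> cube_avg n (\<lambda>y. keep_prob \<kappa> (?g y) * ?g y)"
    by (intro cube_avg_mono)
  moreover have "cube_avg n (\<lambda>y. ?g y / 2 + \<kappa> / 2 * (?g y)\<^sup>2 - \<kappa>\<^sup>2 / 4 * ?g y ^ 3)
      = cube_avg n ?g / 2 + \<kappa> / 2 * cube_avg n (\<lambda>y. (?g y)\<^sup>2) - \<kappa>\<^sup>2 / 4 * cube_avg n (\<lambda>y. ?g y ^ 3)"
    by (simp only: cube_avg_add cube_avg_diff cube_avg_divide cube_avg_mult_left)
  moreover have "3 * \<kappa> / 2 - \<kappa> / l \<le> \<kappa> / 2 * cube_avg n (\<lambda>y. (?g y)\<^sup>2)"
  proof -
    have "\<kappa> / 2 * (3 - 2 / l) \<le> \<kappa> / 2 * cube_avg n (\<lambda>y. (?g y)\<^sup>2)"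
      using assms cube_avg_gamma_square_ge by (intro mult_left_mono) simp_all
    moreover have "\<kappa> / 2 * (3 - 2 / l) = 3 * \<kappa> / 2 - \<kappa> / l"
      by (simp add: algebra_simps)
    ultimately show ?thesis
      by simp
  qed
  moreover have "\<kappa>\<^sup>2 / 4 * cube_avg n (\<lambda>y. ?g y ^ 3) \<le> 15 * \<kappa>\<^sup>2 / 4"
  proof -
    have "\<kappa>\<^sup>2 / 4 * cube_avg n (\<lambda>y. ?g y ^ 3) \<le> \<kappa>\<^sup>2 / 4 * 15"
      by (rule mult_left_mono[OF cube_avg_gamma_cube_le]) simp
    then show ?thesis
      by (simp add: field_simps)
  qed
  ultimately show ?thesis
    using cube_avg_gamma_ge by argo
qed

end

text \<open>This is what the random choice of \<open>U\<close> has to achieve: on all pairs of sampled strings,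
  the kernel of \<open>U\<close> is within \<open>\<rho> / l\<close> of its expectation.\<close>
locale concentrated_sample = generic_sample +
  fixes \<kappa> \<rho> :: real and U :: "bool list set"
  assumes kappa_nonneg: "0 \<le> \<kappa>" and kappa_le_1: "\<kappa> \<le> 1" and rho_nonneg: "0 \<le> \<rho>"
    and concentrated: "\<And>i j. i < l \<Longrightarrow> j < l \<Longrightarrow>
      \<bar>char_kernel n (indicator U) (s i) (s j) - char_kernel n (\<lambda>y. keep_prob \<kappa> (gamma l s y)) (s i) (s j)\<bar> \<le> \<rho> / l"
begin

lemma concentrated_image:
  "x \<in> s ` {..<l} \<Longrightarrow> x' \<in> s ` {..<l} \<Longrightarrow>
    \<bar>char_kernel n (indicator U) x x' - char_kernel n (\<lambda>y. keep_prob \<kappa> (gamma l s y)) x x'\<bar> \<le> \<rho> / l"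
  using concentrated by auto

lemma forr_form_subset_le:
  assumes "\<Delta> \<subseteq> s ` {..<l}"
  shows "forr_form n \<Delta> U f \<le> (1 + \<kappa>) / 2 * (\<Sum>x\<in>\<Delta>. (f x)\<^sup>2) + (\<kappa> + \<rho>) / l * (\<Sum>x\<in>\<Delta>. \<bar>f x\<bar>)\<^sup>2"
proof -
  define q where "q = (\<Sum>x\<in>\<Delta>. (f x)\<^sup>2)"
  define A where "A = (\<Sum>x\<in>\<Delta>. \<bar>f x\<bar>)\<^sup>2"
  have \<Delta>_bits: "\<Delta> \<subseteq> bitstrings n" "\<Delta> \<inter> bitstrings n = \<Delta>"
    using assms image_sample_subset_bitstrings by auto
  have "forr_form n \<Delta> U f = (\<Sum>x\<in>\<Delta>. \<Sum>x'\<in>\<Delta>. f x * f x' * char_kernel n (indicator U) x x')"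
    by (simp add: forr_form_eq_quadratic_form \<Delta>_bits)
  also have "\<dots> \<le> (\<Sum>x\<in>\<Delta>. \<Sum>x'\<in>\<Delta>. f x * f x' * char_kernel n (\<lambda>y. keep_prob \<kappa> (gamma l s y)) x x')
      + \<rho> / l * A"
    unfolding A_def using assms concentrated_image by (intro quadratic_form_perturb) blast
  finally have "forr_form n \<Delta> U f \<le> (\<Sum>x\<in>\<Delta>. \<Sum>x'\<in>\<Delta>. f x * f x' * char_kernel n (\<lambda>y. keep_prob \<kappa> (gamma l s y)) x x')
      + \<rho> / l * A" .
  moreover have "(\<Sum>x\<in>\<Delta>. \<Sum>x'\<in>\<Delta>. f x * f x' * char_kernel n (\<lambda>y. keep_prob \<kappa> (gamma l s y)) x x')
      \<le> q / 2 + \<kappa> / 2 * (\<Sum>x\<in>\<Delta>. \<Sum>x'\<in>\<Delta>. f x * f x' * char_kernel n (gamma l s) x x')"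
    unfolding q_def using \<Delta>_bits(1) by (rule expected_quadratic_form_le[OF kappa_nonneg])
  moreover have "\<kappa> / 2 * (\<Sum>x\<in>\<Delta>. \<Sum>x'\<in>\<Delta>. f x * f x' * char_kernel n (gamma l s) x x')
      \<le> \<kappa> / 2 * (q + 2 / l * A)"
    unfolding q_def A_def using gamma_quadratic_form_le[OF assms] kappa_nonneg by (intro mult_left_mono) simp_all
  moreover have "q / 2 + \<kappa> / 2 * (q + 2 / l * A) + \<rho> / l * A = (1 + \<kappa>) / 2 * q + (\<kappa> + \<rho>) / l * A"
    using l_pos by (simp add: field_simps)
  ultimately show ?thesis
    unfolding q_def A_def by linarith
qed

lemma spec_forr_small_subset_le:
  assumes "\<Delta> \<subseteq> s ` {..<l}" "card \<Delta> \<le> v" "v \<le> l"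
  shows "spec_forr n \<Delta> U \<le> (1 + \<kappa>) / 2 + v / l + \<rho>"
proof (rule spec_forr_le)
  fix f :: "bool list \<Rightarrow> real"
  assume "(\<Sum>x\<in>\<Delta> \<inter> bitstrings n. (f x)\<^sup>2) \<le> 1"
  moreover have "\<Delta> \<inter> bitstrings n = \<Delta>"
    using assms(1) image_sample_subset_bitstrings by auto
  ultimately have q_le: "(\<Sum>x\<in>\<Delta>. (f x)\<^sup>2) \<le> 1"
    by simp
  have "(\<Sum>x\<in>\<Delta>. \<bar>f x\<bar>)\<^sup>2 \<le> (\<Sum>x\<in>\<Delta>. (f x)\<^sup>2) * card \<Delta>"
    using sum_squared_le_sum_of_squares[of "\<lambda>x. \<bar>f x\<bar>" \<Delta>] by simp
  also have "\<dots> \<le> 1 * real v"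
    using q_le assms(2) by (intro mult_mono) (simp_all add: sum_nonneg)
  finally have "(\<kappa> + \<rho>) / l * (\<Sum>x\<in>\<Delta>. \<bar>f x\<bar>)\<^sup>2 \<le> (\<kappa> + \<rho>) / l * (1 * real v)"
    using kappa_nonneg rho_nonneg by (intro mult_left_mono) simp_all
  also have "\<dots> = \<kappa> * (v / l) + \<rho> * (v / l)"
    using l_pos by (simp add: field_simps)
  finally have "(\<kappa> + \<rho>) / l * (\<Sum>x\<in>\<Delta>. \<bar>f x\<bar>)\<^sup>2 \<le> \<kappa> * (v / l) + \<rho> * (v / l)" .
  moreover have "\<kappa> * (v / l) \<le> v / l"
    using kappa_nonneg kappa_le_1 by (intro mult_left_le_one_le) simp_all
  moreover have "\<rho> * (v / l) \<le> \<rho>"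
    using assms(3) rho_nonneg l_pos by (intro mult_right_le_one_le) simp_all
  moreover have "(1 + \<kappa>) / 2 * (\<Sum>x\<in>\<Delta>. (f x)\<^sup>2) \<le> (1 + \<kappa>) / 2"
    using q_le kappa_nonneg by (intro mult_right_le_one_le) (simp_all add: sum_nonneg)
  ultimately show "forr_form n \<Delta> U f \<le> (1 + \<kappa>) / 2 + v / l + \<rho>"
    using forr_form_subset_le[OF assms(1), of f] by linarith
qed

lemma spec_forr_sample_ge:
  "(1 + 3 * \<kappa>) / 2 - 15 * \<kappa>\<^sup>2 / 4 - 5 * \<kappa> / l - \<rho> \<le> spec_forr n (s ` {..<l}) U"
proof -
  define S where "S = s ` {..<l}"
  define f :: "bool list \<Rightarrow> real" where "f x = 1 / sqrt l" for x
  have S_bits: "S \<inter> bitstrings n = S"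
    using image_sample_subset_bitstrings unfolding S_def by auto
  have ff: "f x * f x' = 1 / l" for x x'
    using l_pos by (simp add: f_def real_sqrt_mult[symmetric])
  have unit: "(\<Sum>x\<in>S \<inter> bitstrings n. (f x)\<^sup>2) \<le> 1"
    unfolding S_bits using l_pos by (simp add: power2_eq_square ff S_def card_image_sample)
  have perturbation_term: "\<rho> / l * (\<Sum>x\<in>S. \<bar>f x\<bar>)\<^sup>2 = \<rho>"
    using l_pos by (simp add: f_def S_def card_image_sample power_divide power2_eq_square)
  have "(\<Sum>x\<in>S. \<Sum>x'\<in>S. f x * f x' * char_kernel n (\<lambda>y. keep_prob \<kappa> (gamma l s y)) x x')
      = cube_avg n (\<lambda>y. keep_prob \<kappa> (gamma l s y) * gamma l s y)"
    unfolding quadratic_form_char_kernel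
    by (simp add: S_def sum_image_sample f_def gamma_eq_square sum_divide_distrib[symmetric] power_divide)
  also have "\<dots> \<ge> (1 + 3 * \<kappa>) / 2 - 15 * \<kappa>\<^sup>2 / 4 - 5 * \<kappa> / l"
    using cube_avg_keep_prob_gamma_ge[OF kappa_nonneg] kappa_nonneg l_pos
    by (smt (verit) divide_right_mono of_nat_0_le_iff)
  finally have "(1 + 3 * \<kappa>) / 2 - 15 * \<kappa>\<^sup>2 / 4 - 5 * \<kappa> / l - \<rho>
      \<le> (\<Sum>x\<in>S. \<Sum>x'\<in>S. f x * f x' * char_kernel n (\<lambda>y. keep_prob \<kappa> (gamma l s y)) x x')
        - \<rho> / l * (\<Sum>x\<in>S. \<bar>f x\<bar>)\<^sup>2"
    unfolding perturbation_term by simp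
  also have "\<dots> \<le> (\<Sum>x\<in>S. \<Sum>x'\<in>S. f x * f x' * char_kernel n (indicator U) x x')"
    using concentrated_image quadratic_form_perturb[of S "\<lambda>x x'. char_kernel n (\<lambda>y. keep_prob \<kappa> (gamma l s y)) x x'"
        "\<lambda>x x'. char_kernel n (indicator U) x x'" "\<rho> / l" f]
    unfolding S_def by (simp add: abs_minus_commute)
  also have "\<dots> = forr_form n S U f"
    by (simp add: forr_form_eq_quadratic_form S_bits)
  also have "\<dots> \<le> spec_forr n S U"
    by (rule forr_form_le_spec_forr[OF unit])
  finally show ?thesis
    unfolding S_def .
qed

lemma strong_yes_instance_sample:
  assumes "v \<le> l"
    and "t1 = (1 + \<kappa>) / 2 + real v / real l + \<rho>"
    and "t2 = (1 + 3 * \<kappa>) / 2 - 15 * \<kappa>\<^sup>2 / 4 - 5 * \<kappa> / real l - \<rho>"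
  shows "strong_yes_instance n t1 t2 v (s ` {..<l}) U"
  unfolding strong_yes_instance_def assms(2,3)
  using spec_forr_sample_ge spec_forr_small_subset_le assms(1) by blast

end

lemma (in generic_sample) kernel_deviation_if_not_strong_yes_instance:
  assumes "0 \<le> \<kappa>" "\<kappa> \<le> 1" "0 \<le> \<rho>" "v \<le> l"
    and "t1 = (1 + \<kappa>) / 2 + real v / real l + \<rho>"
    and "t2 = (1 + 3 * \<kappa>) / 2 - 15 * \<kappa>\<^sup>2 / 4 - 5 * \<kappa> / real l - \<rho>"
    and "\<not> strong_yes_instance n t1 t2 v (s ` {..<l}) U"
  shows "\<exists>i<l. \<exists>j<l. \<rho> / l \<le> \<bar>char_kernel n (indicator U) (s i) (s j)
    - char_kernel n (\<lambda>y. keep_prob \<kappa> (gamma l s y)) (s i) (s j)\<bar>"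
proof (rule ccontr)
  assume "\<not> ?thesis"
  then have "concentrated_sample n l s \<kappa> \<rho> U"
    using assms(1-3) by unfold_locales (auto simp: not_le intro: less_imp_le)
  then show False
    using concentrated_sample.strong_yes_instance_sample assms(4-7) by blast
qed

section \<open>Probability estimates\<close>

lemma measure_pmf_bind_le:
  fixes M :: "'a pmf" and F :: "'a \<Rightarrow> 'b pmf"
  assumes "\<And>x. x \<in> set_pmf M \<Longrightarrow> x \<notin> B \<Longrightarrow> measure_pmf.prob (F x) E \<le> \<beta>" and "0 \<le> \<beta>"
  shows "measure_pmf.prob (M \<bind> F) E \<le> measure_pmf.prob M B + \<beta>"
proof -
  have "emeasure (measure_pmf (bind_pmf M F)) E = (\<integral>\<^sup>+x. emeasure (F x) E \<partial>M)"
    by simp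
  also have "\<dots> \<le> (\<integral>\<^sup>+x. (indicator B x + ennreal \<beta>) \<partial>M)"
  proof (intro nn_integral_mono_AE AE_pmfI)
    fix x
    assume x: "x \<in> set_pmf M"
    show "emeasure (F x) E \<le> indicator B x + ennreal \<beta>"
    proof (cases "x \<in> B")
      case True
      then show ?thesis
        by (simp add: measure_pmf.emeasure_le_1 add_increasing2)
    next
      case False
      then show ?thesis
        using assms(1)[OF x False] by (simp add: measure_pmf.emeasure_eq_measure ennreal_leI)
    qed
  qed
  also have "\<dots> = ennreal (measure_pmf.prob M B + \<beta>)"
    using assms(2)
    by (simp add: nn_integral_add measure_pmf.emeasure_space_1 measure_pmf.emeasure_eq_measure ennreal_plus)
  finally have "ennreal (measure_pmf.prob (bind_pmf M F) E) \<le> ennreal (measure_pmf.prob M B + \<beta>)"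
    by (simp only: measure_pmf.emeasure_eq_measure)
  then show ?thesis
    using assms(2) ennreal_le_iff by (metis add_nonneg_nonneg measure_nonneg)
qed

lemma measure_pmf_UN_le:
  fixes c :: real
  assumes "finite I" "\<And>i. i \<in> I \<Longrightarrow> measure_pmf.prob M (A i) \<le> c"
  shows "measure_pmf.prob M (\<Union>i\<in>I. A i) \<le> card I * c"
proof -
  have "measure_pmf.prob M (\<Union>i\<in>I. A i) \<le> (\<Sum>i\<in>I. measure_pmf.prob M (A i))"
    using assms(1) by (intro measure_pmf.finite_measure_subadditive_finite) auto
  also have "\<dots> \<le> (\<Sum>i\<in>I. c)"
    by (intro sum_mono assms(2))
  finally show ?thesis
    by simp
qed

text \<open>A letter of odd multiplicity contributes the single factor \<open>chi z y\<close> for its value \<open>y\<close>,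
  so summing over \<open>y\<close> kills every \<open>z\<close> except \<open>z = 0\<close>, where the product is 1.\<close>
lemma sum_word_corr_fun_upd:
  assumes "odd (count_list t k)"
  shows "(\<Sum>y\<in>bitstrings n. word_corr n (f(k := y)) t) = 1"
proof -
  define R where "R z = (\<Prod>i\<in>set t - {k}. chi z (f i) ^ count_list t i)" for z
  have "k \<in> set t"
    using assms by (metis count_notin even_zero)
  have prod_eq: "prod_list (map (\<lambda>i. chi z ((f(k := y)) i)) t) = chi z y * R z" for z y
  proof -
    have "prod_list (map (\<lambda>i. chi z ((f(k := y)) i)) t)
        = chi z y ^ count_list t k * (\<Prod>i\<in>set t - {k}. chi z ((f(k := y)) i) ^ count_list t i)"
      using \<open>k \<in> set t\<close> by (simp add: prod_list_map_eq_prod_count prod.remove)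
    also have "(\<Prod>i\<in>set t - {k}. chi z ((f(k := y)) i) ^ count_list t i) = R z"
      unfolding R_def by (intro prod.cong) auto
    finally show ?thesis
      using assms by (simp add: chi_power)
  qed
  have "(\<Sum>y\<in>bitstrings n. word_corr n (f(k := y)) t)
      = (\<Sum>y\<in>bitstrings n. \<Sum>z\<in>bitstrings n. chi z y * R z) / 2 ^ n"
    by (simp only: word_corr_def cube_avg_def prod_eq sum_divide_distrib[symmetric])
  also have "\<dots> = (\<Sum>z\<in>bitstrings n. R z * (\<Sum>y\<in>bitstrings n. chi y z)) / 2 ^ n"
    by (subst sum.swap) (simp add: sum_distrib_left chi_commute mult.commute)
  also have "\<dots> = (\<Sum>z\<in>bitstrings n. if z = replicate n False then R z * 2 ^ n else 0) / 2 ^ n"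
    by (intro arg_cong[where f = "\<lambda>x. x / 2 ^ n"] sum.cong refl) (simp add: sum_chi)
  also have "\<dots> = 1"
    by (simp add: R_def)
  finally show ?thesis .
qed

lemma card_word_corr_fun_upd_nonzero_le:
  assumes "odd (count_list t k)" and "\<And>i. i \<in> set t \<Longrightarrow> i \<noteq> k \<Longrightarrow> f i \<in> bitstrings n"
  shows "card {y\<in>bitstrings n. word_corr n (f(k := y)) t \<noteq> 0} \<le> 1"
proof -
  have cases: "word_corr n (f(k := y)) t = 0 \<or> word_corr n (f(k := y)) t = 1" if "y \<in> bitstrings n" for y
    by (rule word_corr_cases) (use assms(2) that in auto)
  have "real (card {y\<in>bitstrings n. word_corr n (f(k := y)) t \<noteq> 0})
      = (\<Sum>y\<in>{y\<in>bitstrings n. word_corr n (f(k := y)) t \<noteq> 0}. 1)"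
    by simp
  also have "\<dots> = (\<Sum>y\<in>{y\<in>bitstrings n. word_corr n (f(k := y)) t \<noteq> 0}. word_corr n (f(k := y)) t)"
  proof (rule sum.cong)
    fix y
    assume "y \<in> {y\<in>bitstrings n. word_corr n (f(k := y)) t \<noteq> 0}"
    with cases[of y] show "1 = word_corr n (f(k := y)) t"
      by auto
  qed simp
  also have "\<dots> = (\<Sum>y\<in>bitstrings n. word_corr n (f(k := y)) t)"
    by (rule sum.mono_neutral_left) auto
  also have "\<dots> = 1"
    using assms(1) by (rule sum_word_corr_fun_upd)
  finally show ?thesis
    by simp
qed

definition sample_pmf :: "nat \<Rightarrow> nat \<Rightarrow> (nat \<Rightarrow> bool list) pmf" where
  "sample_pmf n l = Pi_pmf {..<l} [] (\<lambda>_. pmf_of_set (bitstrings n))"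

lemma set_sample_pmf: "s \<in> set_pmf (sample_pmf n l) \<Longrightarrow> i < l \<Longrightarrow> s i \<in> bitstrings n"
  unfolding sample_pmf_def using bitstrings_nonempty[of n]
  by (auto simp: set_Pi_pmf PiE_dflt_def)

lemma sample_pmf_resample:
  assumes "k < l"
  shows "sample_pmf n l = Pi_pmf ({..<l} - {k}) [] (\<lambda>_. pmf_of_set (bitstrings n))
    \<bind> (\<lambda>f. map_pmf (\<lambda>y. f(k := y)) (pmf_of_set (bitstrings n)))"
proof -
  define A where "A = {..<l} - {k}"
  define p where "p = pmf_of_set (bitstrings n)"
  have A: "{..<l} = insert k A" "k \<notin> A" "finite A"
    using assms unfolding A_def by auto
  have "sample_pmf n l = do {y \<leftarrow> p; f \<leftarrow> Pi_pmf A [] (\<lambda>_. p); return_pmf (f(k := y))}"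
    unfolding sample_pmf_def p_def[symmetric] A(1) by (rule Pi_pmf_insert'[OF A(3,2)])
  also have "\<dots> = do {f \<leftarrow> Pi_pmf A [] (\<lambda>_. p); y \<leftarrow> p; return_pmf (f(k := y))}"
    by (rule bind_commute_pmf)
  finally show ?thesis
    unfolding A_def p_def by (simp add: map_pmf_def)
qed

text \<open>Resampling a letter of odd multiplicity last, at most one of its \<open>2 ^ n\<close> values makes the
  correlation nonzero.\<close>
lemma prob_word_corr_nonzero_le:
  assumes "t \<in> words l m" "\<not> even_word t"
  shows "measure_pmf.prob (sample_pmf n l) {s. word_corr n s t \<noteq> 0} \<le> 1 / 2 ^ n"
proof -
  obtain k where k: "odd (count_list t k)"
    using assms(2) unfolding even_word_def by blast
  then have "k \<in> set t"
    by (metis count_notin even_zero)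
  then have "k < l"
    using assms(1) by (auto simp: words_def)
  have "measure_pmf.prob (sample_pmf n l) {s. word_corr n s t \<noteq> 0}
      \<le> measure_pmf.prob (Pi_pmf ({..<l} - {k}) [] (\<lambda>_. pmf_of_set (bitstrings n))) {} + 1 / 2 ^ n"
    unfolding sample_pmf_resample[OF \<open>k < l\<close>]
  proof (rule measure_pmf_bind_le)
    fix f
    assume f: "f \<in> set_pmf (Pi_pmf ({..<l} - {k}) [] (\<lambda>_. pmf_of_set (bitstrings n)))"
    have "f i \<in> bitstrings n" if "i \<in> set t" "i \<noteq> k" for i
      using that f assms(1) bitstrings_nonempty[of n] by (auto simp: set_Pi_pmf PiE_dflt_def words_def)
    then have "card (bitstrings n \<inter> {y. word_corr n (f(k := y)) t \<noteq> 0}) \<le> 1"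
      using card_word_corr_fun_upd_nonzero_le[OF k] by (simp add: Int_def)
    then show "measure_pmf.prob (map_pmf (\<lambda>y. f(k := y)) (pmf_of_set (bitstrings n))) {s. word_corr n s t \<noteq> 0}
        \<le> 1 / 2 ^ n"
      using bitstrings_nonempty[of n]
      by (simp add: measure_pmf_of_set vimage_def card_bitstrings divide_right_mono)
  qed simp
  then show ?thesis
    by simp
qed

lemma prob_not_xor_generic_le:
  "measure_pmf.prob (sample_pmf n l) {s. \<not> xor_generic n l s} \<le> real l ^ 6 / 2 ^ n"
proof -
  define I where "I = {t\<in>words l 6. \<not> even_word t}"
  have "{s. \<not> xor_generic n l s} = (\<Union>t\<in>I. {s. word_corr n s t \<noteq> 0})"
    unfolding xor_generic_def I_def by auto
  moreover have "measure_pmf.prob (sample_pmf n l) (\<Union>t\<in>I. {s. word_corr n s t \<noteq> 0}) \<le> card I * (1 / 2 ^ n)"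
    by (rule measure_pmf_UN_le) (auto simp: I_def intro: prob_word_corr_nonzero_le)
  moreover have "real (card I) * (1 / 2 ^ n) \<le> real l ^ 6 * (1 / 2 ^ n)"
  proof -
    have "card I \<le> card (words l 6)"
      unfolding I_def by (rule card_mono) auto
    then show ?thesis
      by (intro mult_right_mono) (simp_all add: card_words flip: of_nat_power)
  qed
  ultimately show ?thesis
    by simp
qed

lemma prob_bernoulli_weighted_sum_deviation_le:
  fixes Y :: "'a set" and q w :: "'a \<Rightarrow> real"
  assumes "finite Y" "\<And>y. y \<in> Y \<Longrightarrow> 0 \<le> q y \<and> q y \<le> 1" "0 \<le> \<epsilon>" "0 < (\<Sum>y\<in>Y. (w y)\<^sup>2)"
  shows "measure_pmf.prob (Pi_pmf Y False (\<lambda>y. bernoulli_pmf (q y)))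
     {g. \<epsilon> \<le> \<bar>(\<Sum>y\<in>Y. if g y then w y else 0) - (\<Sum>y\<in>Y. q y * w y)\<bar>}
     \<le> 2 * exp (-2 * \<epsilon>\<^sup>2 / (\<Sum>y\<in>Y. (w y)\<^sup>2))"
proof -
  define P where "P = Pi_pmf Y False (\<lambda>y. bernoulli_pmf (q y))"
  define X where "X = (\<lambda>y (g :: 'a \<Rightarrow> bool). if g y then w y else 0)"
  have expectation: "measure_pmf.expectation P (X y) = q y * w y" if "y \<in> Y" for y
  proof -
    have "measure_pmf.expectation P (X y) = measure_pmf.expectation (map_pmf (\<lambda>g. g y) P) (\<lambda>b. if b then w y else 0)"
      unfolding X_def by simp
    also have "map_pmf (\<lambda>g. g y) P = bernoulli_pmf (q y)"
      unfolding P_def using assms(1) that by (simp add: Pi_pmf_component)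
    finally show ?thesis
      using assms(2)[OF that] by simp
  qed
  interpret Hoeffding_ineq "measure_pmf P" Y X "\<lambda>y. min 0 (w y)" "\<lambda>y. max 0 (w y)"
    "\<Sum>y\<in>Y. measure_pmf.expectation P (X y)"
  proof unfold_locales
    show "finite Y"
      by (rule assms(1))
    have "prob_space.indep_vars (measure_pmf P) (\<lambda>_. count_space UNIV) (\<lambda>y g. g y) Y"
      unfolding P_def by (rule indep_vars_Pi_pmf[OF assms(1)])
    then have "prob_space.indep_vars (measure_pmf P) (\<lambda>_. borel) (\<lambda>y g. (\<lambda>b. if b then w y else 0) (g y)) Y"
      by (rule prob_space.indep_vars_compose2[OF prob_space_measure_pmf]) auto
    then show "prob_space.indep_vars (measure_pmf P) (\<lambda>_. borel) X Y"
      unfolding X_def .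
  next
    fix y
    show "AE g in measure_pmf P. X y g \<in> {min 0 (w y)..max 0 (w y)}"
      unfolding X_def by (intro AE_pmfI) auto
  qed simp
  have range: "(max 0 (w y) - min 0 (w y))\<^sup>2 = (w y)\<^sup>2" for y
    by (cases "0 \<le> w y") (auto simp: max_def min_def)
  have "measure_pmf.prob P {g \<in> space (measure_pmf P). \<epsilon> \<le> \<bar>(\<Sum>y\<in>Y. X y g) - (\<Sum>y\<in>Y. measure_pmf.expectation P (X y))\<bar>}
      \<le> 2 * exp (-2 * \<epsilon>\<^sup>2 / (\<Sum>y\<in>Y. (max 0 (w y) - min 0 (w y))\<^sup>2))"
    by (rule Hoeffding_ineq_abs_ge[OF assms(3)]) (simp add: range assms(4))
  moreover have "(\<Sum>y\<in>Y. measure_pmf.expectation P (X y)) = (\<Sum>y\<in>Y. q y * w y)"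
    by (rule sum.cong[OF refl]) (rule expectation)
  ultimately show ?thesis
    unfolding P_def[symmetric] X_def range by simp
qed

lemma prob_char_kernel_deviation_le:
  assumes "\<And>y. 0 \<le> q y \<and> q y \<le> 1" "0 \<le> \<epsilon>"
  shows "measure_pmf.prob (Pi_pmf (bitstrings n) False (\<lambda>y. bernoulli_pmf (q y)))
     {g. \<epsilon> \<le> \<bar>char_kernel n (indicator {y\<in>bitstrings n. g y}) x x' - char_kernel n q x x'\<bar>}
     \<le> 2 * exp (-2 * \<epsilon>\<^sup>2 * 2 ^ n)"
proof -
  define w where "w y = chi y x * chi y x' / 2 ^ n" for y
  have "char_kernel n (indicator {y\<in>bitstrings n. g y}) x x' = (\<Sum>y\<in>bitstrings n. if g y then w y else 0)" for g
    unfolding char_kernel_def cube_avg_def w_def sum_divide_distrib by (intro sum.cong refl) (simp add: indicator_def)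
  moreover have "char_kernel n q x x' = (\<Sum>y\<in>bitstrings n. q y * w y)"
    unfolding char_kernel_def cube_avg_def w_def by (simp add: sum_divide_distrib mult.assoc)
  moreover have w_sq: "(\<Sum>y\<in>bitstrings n. (w y)\<^sup>2) = 1 / 2 ^ n"
  proof -
    have "(w y)\<^sup>2 = 1 / (2 ^ n * 2 ^ n)" for y
      unfolding w_def power2_eq_square by (simp add: field_simps)
    then show ?thesis
      by (simp add: card_bitstrings)
  qed
  ultimately show ?thesis
    using prob_bernoulli_weighted_sum_deviation_le[of "bitstrings n" q \<epsilon> w] assms by simp
qed

definition Strong_given :: "nat \<Rightarrow> nat \<Rightarrow> real \<Rightarrow> (nat \<Rightarrow> bool list) \<Rightarrow> (bool list set \<times> bool list set) pmf" where
  "Strong_given n l \<kappa> s =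
     Pi_pmf (bitstrings n) False (\<lambda>y. bernoulli_pmf (keep_prob \<kappa> (gamma l s y)))
     \<bind> (\<lambda>g. return_pmf (s ` {..<l}, {y \<in> bitstrings n. g y}))"

lemma Strong_eq_bind_sample_pmf: "Strong n l \<kappa> = sample_pmf n l \<bind> Strong_given n l \<kappa>"
  unfolding Strong_def sample_pmf_def Strong_given_def keep_prob_def ..

lemma prob_not_strong_yes_instance_Strong_given:
  assumes "generic_sample n l s" "0 \<le> \<kappa>" "\<kappa> \<le> 1" "0 \<le> \<rho>" "v \<le> l"
    and "t1 = (1 + \<kappa>) / 2 + real v / real l + \<rho>"
    and "t2 = (1 + 3 * \<kappa>) / 2 - 15 * \<kappa>\<^sup>2 / 4 - 5 * \<kappa> / real l - \<rho>"
  shows "measure_pmf.prob (Strong_given n l \<kappa> s) {(S, U). \<not> strong_yes_instance n t1 t2 v S U}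
    \<le> 2 * (real l)\<^sup>2 * exp (- (\<rho>\<^sup>2 * 2 ^ n) / (2 * (real l)\<^sup>2))"
proof -
  interpret generic_sample n l s
    by (fact assms(1))
  define q where "q = (\<lambda>y. keep_prob \<kappa> (gamma l s y))"
  define PU where "PU = Pi_pmf (bitstrings n) False (\<lambda>y. bernoulli_pmf (keep_prob \<kappa> (gamma l s y)))"
  define Bad where "Bad = (\<lambda>(i, j). {g. \<rho> / l \<le> \<bar>char_kernel n (indicator {y\<in>bitstrings n. g y}) (s i) (s j)
      - char_kernel n q (s i) (s j)\<bar>})"
  have q_bounds: "0 \<le> q y \<and> q y \<le> 1" for y
    using assms(2) gamma_nonneg unfolding q_def by (intro conjI keep_prob_bounds) simp_all
  have "{g. (s ` {..<l}, {y \<in> bitstrings n. g y}) \<in> {(S, U). \<not> strong_yes_instance n t1 t2 v S U}}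
      \<subseteq> (\<Union>p\<in>{..<l} \<times> {..<l}. Bad p)"
    using kernel_deviation_if_not_strong_yes_instance[OF assms(2-7)] by (auto simp: Bad_def q_def)
  then have "measure_pmf.prob (Strong_given n l \<kappa> s) {(S, U). \<not> strong_yes_instance n t1 t2 v S U}
      \<le> measure_pmf.prob PU (\<Union>p\<in>{..<l} \<times> {..<l}. Bad p)"
    unfolding Strong_given_def PU_def[symmetric]
    by (simp add: map_pmf_def[symmetric] vimage_def measure_pmf.finite_measure_mono)
  also have "\<dots> \<le> card ({..<l} \<times> {..<l}) * (2 * exp (-2 * (\<rho> / l)\<^sup>2 * 2 ^ n))"
  proof (rule measure_pmf_UN_le)
    fix p :: "nat \<times> nat"
    show "measure_pmf.prob PU (Bad p) \<le> 2 * exp (-2 * (\<rho> / l)\<^sup>2 * 2 ^ n)"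
      unfolding PU_def Bad_def q_def using q_bounds[unfolded q_def] assms(4)
      by (cases p) (simp only: prod.case, rule prob_char_kernel_deviation_le, simp_all)
  qed simp
  also have "\<dots> \<le> 2 * (real l)\<^sup>2 * exp (- (\<rho>\<^sup>2 * 2 ^ n) / (2 * (real l)\<^sup>2))"
  proof -
    have "-2 * (\<rho> / l)\<^sup>2 * 2 ^ n \<le> - (\<rho>\<^sup>2 * 2 ^ n) / (2 * (real l)\<^sup>2)"
      using l_pos by (simp add: power_divide field_simps)
    from mult_left_mono[OF exp_mono[OF this], of "2 * (real l)\<^sup>2"] show ?thesis
      by (simp add: card_cartesian_product power2_eq_square mult_ac)
  qed
  finally show ?thesis .
qed

text \<open>The maximum of \<open>\<kappa> - 15 \<kappa>\<^sup>2 / 4\<close> is \<open>1 / 15\<close>, so ordered thresholds force \<open>v / l < 1\<close>.\<close>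
lemma ordered_thresholds_imp_less:
  fixes \<kappa> \<rho> :: real and l v :: nat
  assumes "0 < l" "0 \<le> \<kappa>" "0 \<le> \<rho>"
    and "(1 + \<kappa>) / 2 + real v / real l + \<rho> < (1 + 3 * \<kappa>) / 2 - 15 * \<kappa>\<^sup>2 / 4 - 5 * \<kappa> / real l - \<rho>"
  shows "v < l"
proof -
  have "\<kappa> - 15 * \<kappa>\<^sup>2 / 4 \<le> 1 / 15"
    using zero_le_power2[of "\<kappa> - 2 / 15"] by (simp add: power2_eq_square algebra_simps)
  moreover have "0 \<le> 5 * \<kappa> / real l"
    using assms(2) by simp
  ultimately have "real v / real l < 1"
    using assms(3,4) by (simp add: field_simps)
  then show ?thesis
    using assms(1) by (simp add: divide_less_eq)
qed

theorem mainTheorem7: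
  fixes n l v :: nat and \<kappa> \<rho> t1 t2 :: real
  assumes "n > 0" "l > 0" "v > 0"
    and "0 \<le> \<kappa>" "\<kappa> \<le> 1" "\<rho> \<ge> 0"
    and "t1 = (1 + \<kappa>) / 2 + real v / real l + \<rho>"
    and "t2 = (1 + 3 * \<kappa>) / 2 - 15 * \<kappa>\<^sup>2 / 4 - 5 * \<kappa> / real l - \<rho>"
    and "t1 < t2"
  shows "measure_pmf.prob (Strong n l \<kappa>)
           {(S, U). \<not> strong_yes_instance n t1 t2 v S U}
         \<le> real l ^ 6 * 2 powr (- real n)
           + 2 * (real l)\<^sup>2 * exp (- (\<rho>\<^sup>2 * 2 ^ n) / (2 * (real l)\<^sup>2))"
proof -
  have "v \<le> l"
    using ordered_thresholds_imp_less[of l \<kappa> \<rho> v] assms(2,4,6-9) by simp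
  have "measure_pmf.prob (Strong n l \<kappa>) {(S, U). \<not> strong_yes_instance n t1 t2 v S U}
      \<le> measure_pmf.prob (sample_pmf n l) {s. \<not> xor_generic n l s}
        + 2 * (real l)\<^sup>2 * exp (- (\<rho>\<^sup>2 * 2 ^ n) / (2 * (real l)\<^sup>2))"
    unfolding Strong_eq_bind_sample_pmf
  proof (rule measure_pmf_bind_le)
    fix s
    assume "s \<in> set_pmf (sample_pmf n l)" "s \<notin> {s. \<not> xor_generic n l s}"
    then have "generic_sample n l s"
      using assms(2) set_sample_pmf by unfold_locales auto
    then show "measure_pmf.prob (Strong_given n l \<kappa> s) {(S, U). \<not> strong_yes_instance n t1 t2 v S U}
      \<le> 2 * (real l)\<^sup>2 * exp (- (\<rho>\<^sup>2 * 2 ^ n) / (2 * (real l)\<^sup>2))"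
      using prob_not_strong_yes_instance_Strong_given assms(4-8) \<open>v \<le> l\<close> by blast
  qed simp
  moreover have "real l ^ 6 / 2 ^ n = real l ^ 6 * 2 powr (- real n)"
    by (simp add: powr_minus powr_realpow divide_inverse)
  ultimately show ?thesis
    using prob_not_xor_generic_le[of n l] by simp
qed

end
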